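(* Let $p$ be an odd prime, $q$ a power of $p$, $\xi$ a generator of $\mathbb F_q^*$, $\ell$ an odd prime with $\ell\ne p$ and $\ell\mid q-1$, and $m,n$ positive integers. Let $\ell^u$ exactly divide $q-1$, $v=\min\{m,u\}$, $\zeta=\xi^{(q-1)/\ell^v}$, and let $C$ be a $\lambda$-constacyclic code of length $2\ell^mp^n$ over $\mathbb F_q$, $\lambda\in\mathbb F_q^*$. Empty products are $1$. (I) If $c_1\in\mathbb F_q^*$, $c_1^{2\ell^mp^n}\lambda=1$ and $C=\big\langle\prod_{i=0}^{\ell^v-1}(X-c_1^{-1}\zeta^i)^{\varepsilon_i}(X+c_1^{-1}\zeta^i)^{\epsilon_i}\prod_{j=1}^{m-u}\prod_{1\le k\le\ell^v,\,\ell\nmid k}(X^{\ell^j}-c_1^{-\ell^j}\zeta^k)^{\tau_k^j}(X^{\ell^j}+c_1^{-\ell^j}\zeta^k)^{\sigma_k^j}\big\rangle$ with all exponents in $[0,p^n]$, then $$C^\perp=\Big\langle\prod_{i=0}^{\ell^v-1}(X-c_1\zeta^{-i})^{p^n-\varepsilon_i}(X+c_1\zeta^{-i})^{p^n-\epsilon_i}\prod_{j=1}^{m-u}\prod_{\substack{k=1\\\ell\nmid k}}^{\ell^v}(X^{\ell^j}-c_1^{\ell^j}\zeta^{-k})^{p^n-\tau_k^j}(X^{\ell^j}+c_1^{\ell^j}\zeta^{-k})^{p^n-\sigma_k^j}\Big\rangle.$$ (II.A) If $m\le u$, $c_2\in\mathbb F_q^*$, $c_2^{2\ell^mp^n}\lambda=\xi^{\ell^vp^n}$,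 $\alpha=\xi^{(q-1)/\ell^m}$ and $C=\langle\prod_{i=0}^{\ell^m-1}(X^2-c_2^{-2}\xi\alpha^i)^{\varepsilon_i}\rangle$ with $0\le\varepsilon_i\le p^n$, then $C^\perp=\langle\prod_{i=0}^{\ell^m-1}(X^2-c_2^{2}\xi^{-1}\alpha^{-i})^{p^n-\varepsilon_i}\rangle$. (II.B) If $m>u$, $c_2\in\mathbb F_q^*$, $c_2^{2\ell^mp^n}\lambda=\xi^{\ell^vp^n}$, $\beta$ is the element of $\langle\xi^{\ell^u}\rangle$ with $\beta^{\ell^m}\xi^{\ell^u}=1$, and $C=\big\langle\prod_{i=0}^{\ell^u-1}(X^2-c_2^{-2}\beta^{-1}\zeta^i)^{\varepsilon_i}\prod_{j=1}^{m-u}\prod_{1\le k\le\ell^u,\,\ell\nmid k}(X^{2\ell^j}-c_2^{-2\ell^j}\beta^{-\ell^j}\zeta^k)^{\sigma_k^j}\big\rangle$ with exponents in $[0,p^n]$, then $$C^\perp=\Big\langle\prod_{i=0}^{\ell^u-1}(X^2-c_2^{2}\beta\zeta^{-i})^{p^n-\varepsilon_i}\prod_{j=1}^{m-u}\prod_{\substack{k=1\\\ell\nmid k}}^{\ell^u}(X^{2\ell^j}-c_2^{2\ell^j}\beta^{\ell^j}\zeta^{-k})^{p^n-\sigma_k^j}\Big\rangle.$$ (III) Suppose $1\le j\le 2\ell^v-1$, $j\ne\ell^v$, $d_1\in\mathbb F_q^*$ with $d_1^{2\ell^mp^n}\lambda=\xi^{jp^n}$, $j=y\ell^z$ with $\gcd(y,\ell)=1$,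 $0\le z\le v-1$, and $\delta=\xi^{(q-1)/\ell^z}$. (III.A) If $y$ is odd and $C=\langle\prod_{i=0}^{\ell^z-1}(X^{2\ell^{m-z}}-d_1^{-2\ell^{m-z}}\delta^i\xi^y)^{\varepsilon_i}\rangle$ with $0\le\varepsilon_i\le p^n$, then $C^\perp=\langle\prod_{i=0}^{\ell^z-1}(X^{2\ell^{m-z}}-d_1^{2\ell^{m-z}}\delta^{-i}\xi^{-y})^{p^n-\varepsilon_i}\rangle$. (III.B) If $y=2y_0$ and $C=\langle\prod_{i=0}^{\ell^z-1}(X^{\ell^{m-z}}-d_1^{-\ell^{m-z}}\delta^i\xi^{y_0})^{\varepsilon_i}(X^{\ell^{m-z}}+d_1^{-\ell^{m-z}}\delta^i\xi^{y_0})^{\epsilon_i}\rangle$ with $0\le\varepsilon_i,\epsilon_i\le p^n$, then $C^\perp=\langle\prod_{i=0}^{\ell^z-1}(X^{\ell^{m-z}}-d_1^{\ell^{m-z}}\delta^{-i}\xi^{-y_0})^{p^n-\varepsilon_i}(X^{\ell^{m-z}}+d_1^{\ell^{m-z}}\delta^{-i}\xi^{-y_0})^{p^n-\epsilon_i}\rangle$. In each case $C^\perp$ is a $\lambda^{-1}$-constacyclic code.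
   Context: For $\mu\in\mathbb F_q^*$, a $\mu$-constacyclic code of length $N$ over $\mathbb F_q$ is a linear subspace of $\mathbb F_q^N$ closed under $(c_0,\dots,c_{N-1})\mapsto(\mu c_{N-1},c_0,\dots,c_{N-2})$; such codes are identified with ideals of $\mathbb F_q[X]/\langle X^N-\mu\rangle$, and $\langle g(X)\rangle$ denotes the ideal generated by the image of $g(X)$ (in the corresponding quotient ring; for $C^\perp$ the ring is $\mathbb F_q[X]/\langle X^N-\lambda^{-1}\rangle$). $C^\perp$ is the dual code with respect to the standard Euclidean inner product on $\mathbb F_q^N$. $\langle\xi^k\rangle$ denotes the subgroup of $\mathbb F_q^*$ generated by $\xi^k$. *)

theory Defs
  imports "HOL-Computational_Algebra.Computational_Algebra" "HOL-Library.Cardinality"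
begin

text \<open>Codewords (c_0,...,c_{N-1}) in F_q^N are identified with polynomials
  c_0 + c_1 X + ... + c_{N-1} X^(N-1) of degree < N, i.e. with the canonical
  representatives of F_q[X]/<X^N - mu>.\<close>

definition words :: "nat \<Rightarrow> 'a::field poly set" where
  "words N = {c. degree c < N}"

definition cmod :: "nat \<Rightarrow> 'a::field \<Rightarrow> 'a poly" where
  "cmod N mu = monom 1 N - [:mu:]"

definition gen_ideal :: "nat \<Rightarrow> 'a::field \<Rightarrow> 'a poly \<Rightarrow> 'a poly set" where
  "gen_ideal N mu g = {(f * g) mod cmod N mu | f. True}"

text \<open>mu-constacyclic code of length N: a linear subspace of F_q^N closed under
  the constacyclic shift (c_0,...,c_{N-1}) |-> (mu c_{N-1}, c_0, ..., c_{N-2}),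
  which on representatives is c |-> X*c mod (X^N - mu).\<close>
definition constacyclic :: "nat \<Rightarrow> 'a::field \<Rightarrow> 'a poly set \<Rightarrow> bool" where
  "constacyclic N mu C \<longleftrightarrow> C \<subseteq> words N \<and> 0 \<in> C \<and>
     (\<forall>a\<in>C. \<forall>b\<in>C. a + b \<in> C) \<and> (\<forall>r. \<forall>a\<in>C. smult r a \<in> C) \<and>
     (\<forall>a\<in>C. (monom 1 1 * a) mod cmod N mu \<in> C)"

definition dual_code :: "nat \<Rightarrow> 'a::field poly set \<Rightarrow> 'a poly set" where
  "dual_code N C = {c \<in> words N. \<forall>d\<in>C. (\<Sum>i<N. coeff c i * coeff d i) = 0}"

definition is_generator :: "'a::field \<Rightarrow> bool" where
  "is_generator xi \<longleftrightarrow> xi \<noteq> 0 \<and> (\<forall>x. x \<noteq> 0 \<longrightarrow> (\<exists>k::nat. x = xi ^ k))"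

end

(* If g h = X^N - lambda, the dual of the lambda-constacyclic code <g> is the
   lambda^-1-constacyclic code generated by the reciprocal polynomial h* of h.  In each case
   the given generator is g = prod_i f_i^(e_i) for binomials f_i = X^L - a_i whose product F
   satisfies F^(p^n) = X^N - lambda: F = X^(2 l^m) - a splits over the roots of unity of
   l-power order, and (X^M - a)^(p^n) = X^(M p^n) - a^(p^n) in characteristic p.  Hence
   h = prod_i f_i^(p^n - e_i), and since the reciprocal of X^L - a is -a (X^L - a^-1), the
   dual is generated by the stated product. *)

theory Submission
  imports Defs "HOL-Number_Theory.Residues"
begin

(* Residues imports HOL-Algebra, whose monom, coeff and smult would shadow those of poly. *)
hide_const (open) UnivPoly.monom UnivPoly.coeff Module.module.smult

section \<open>Duals of constacyclic codes\<close>

lemma degree_cmod: "N > 0 \<Longrightarrow> degree (cmod N (mu::'a::field)) = N"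
  by (rule antisym) (auto intro!: degree_le le_degree simp: cmod_def coeff_pCons')

lemma reflect_poly_cmod:
  assumes "N > 0"
  shows "reflect_poly (cmod N (mu::'a::field)) = 1 - smult mu (monom 1 N)"
proof -
  have "degree (monom 1 N - [:mu:]) = N" using degree_cmod[OF assms, of mu] by (simp add: cmod_def)
  then show ?thesis unfolding cmod_def
    by (intro poly_eqI) (use assms in \<open>auto simp: coeff_reflect_poly coeff_pCons'\<close>)
qed

lemma reflect_poly_monom_mult: "reflect_poly (monom 1 k * p) = reflect_poly (p::'a::idom poly)"
proof -
  have "reflect_poly (monom (1::'a) k) = 1"
    by (rule poly_eqI) (auto simp: coeff_reflect_poly degree_monom_eq)
  then show ?thesis by (simp add: reflect_poly_mult)
qed

lemma inner_eq_coeff_mult_reflect_poly: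
  fixes c d :: "'a::comm_semiring_1 poly"
  assumes "degree c < N" "degree d < N"
  shows "(\<Sum>i<N. coeff c i * coeff d i) = coeff (c * reflect_poly d) (degree d)"
proof -
  have "coeff (c * reflect_poly d) (degree d) = (\<Sum>i\<le>degree d. coeff c i * coeff d i)"
    unfolding coeff_mult by (intro sum.cong) (auto simp: coeff_reflect_poly)
  also have "\<dots> = (\<Sum>i<N. coeff c i * coeff d i)"
    using assms by (intro sum.mono_neutral_left) (auto simp: coeff_eq_0)
  finally show ?thesis by simp
qed

lemma gen_ideal_eq_multiples:
  fixes g :: "'a::field poly"
  assumes N: "N > 0" and dvd: "g dvd cmod N mu"
  shows "gen_ideal N mu g = {c. degree c < N \<and> g dvd c}"
proof -
  have deg: "degree (cmod N mu) = N" and nz: "cmod N mu \<noteq> 0"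
    using degree_cmod[OF N, of mu] N by auto
  show ?thesis
  proof (intro Set.set_eqI iffI)
    fix c assume "c \<in> gen_ideal N mu g"
    then obtain f where c: "c = (f * g) mod cmod N mu" by (auto simp: gen_ideal_def)
    have "degree c < N" using degree_mod_less[OF nz, of "f * g"] deg c N by auto
    moreover have "g dvd c" unfolding c using dvd by (simp add: dvd_mod_iff)
    ultimately show "c \<in> {c. degree c < N \<and> g dvd c}" by simp
  next
    fix c assume "c \<in> {c. degree c < N \<and> g dvd c}"
    then obtain e where "degree c < N" and "c = g * e" by (auto elim: dvdE)
    then have "c = (e * g) mod cmod N mu" using deg by (simp add: mod_poly_less mult.commute)
    then show "c \<in> gen_ideal N mu g" by (auto simp: gen_ideal_def)
  qed
qed

lemma factors_of_cmod:
  fixes g h :: "'a::field poly"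
  assumes N: "N > 0" and lam: "lam \<noteq> 0" and gh: "g * h = cmod N lam"
  shows "g \<noteq> 0" "coeff h 0 \<noteq> 0" "degree g + degree h = N"
    and "reflect_poly g * reflect_poly h = 1 - smult lam (monom 1 N)"
proof -
  have "coeff g 0 * coeff h 0 = - lam"
    using N by (simp flip: coeff_mult_0 add: gh cmod_def)
  then show "coeff h 0 \<noteq> 0" using lam by auto
  have "degree (cmod N lam) = N" using N by (rule degree_cmod)
  moreover have "g \<noteq> 0" "h \<noteq> 0" using gh calculation N by auto
  ultimately show "g \<noteq> 0" "degree g + degree h = N" using gh by (auto simp flip: degree_mult_eq)
  show "reflect_poly g * reflect_poly h = 1 - smult lam (monom 1 N)"
    using reflect_poly_cmod[OF N] by (simp flip: reflect_poly_mult add: gh)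
qed

lemma orthogonal_if_dvd:
  fixes g h :: "'a::field poly"
  assumes N: "N > 0" and lam: "lam \<noteq> 0" and gh: "g * h = cmod N lam"
    and c: "degree c < N" "reflect_poly h dvd c" and d: "degree d < N" "g dvd d"
  shows "(\<Sum>i<N. coeff c i * coeff d i) = 0"
proof (cases "c = 0 \<or> d = 0")
  case False
  note facts = factors_of_cmod[OF N lam gh]
  obtain a where a: "c = reflect_poly h * a" using c by (auto elim: dvdE)
  obtain e where e: "d = g * e" using d by (auto elim: dvdE)
  have "a \<noteq> 0" "e \<noteq> 0" "reflect_poly h \<noteq> 0" using False a e facts(2) by auto
  then have deg_d: "degree d = degree g + degree e" and deg_a: "degree a < degree g"
    using facts a e c by (auto simp: degree_mult_eq)
  have "c * reflect_poly d = (a * reflect_poly e) * (reflect_poly g * reflect_poly h)"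
    by (simp add: a e reflect_poly_mult algebra_simps)
  also have "\<dots> = a * reflect_poly e - monom lam N * (a * reflect_poly e)"
    by (simp add: facts(4) algebra_simps smult_monom)
  finally have "coeff (c * reflect_poly d) (degree d) = coeff (a * reflect_poly e) (degree d)"
    using d by (simp add: coeff_monom_mult)
  also have "\<dots> = 0"
  proof (rule coeff_eq_0)
    have "degree (a * reflect_poly e) \<le> degree a + degree (reflect_poly e)"
      by (rule degree_mult_le)
    then show "degree (a * reflect_poly e) < degree d"
      using deg_d deg_a degree_reflect_poly_le[of e] by linarith
  qed
  finally show ?thesis using inner_eq_coeff_mult_reflect_poly[OF c(1) d(1)] by simp
qed auto

lemma coeff_mult_reflect_poly_eq_0_if_orthogonal:
  fixes g :: "'a::field poly"
  assumes c: "degree c < N" and g: "g \<noteq> 0" and i: "degree g \<le> i" "i < N"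
    and orth: "\<And>d. degree d < N \<Longrightarrow> g dvd d \<Longrightarrow> (\<Sum>i<N. coeff c i * coeff d i) = 0"
  shows "coeff (c * reflect_poly g) i = 0"
proof -
  define d where "d = monom 1 (i - degree g) * g"
  have "degree d = i" using g i by (simp add: d_def degree_mult_eq degree_monom_eq)
  then show ?thesis
    using orth[of d] inner_eq_coeff_mult_reflect_poly[OF c, of d] i
    by (simp add: d_def reflect_poly_monom_mult)
qed

lemma dvd_if_orthogonal:
  fixes g h :: "'a::field poly"
  assumes N: "N > 0" and lam: "lam \<noteq> 0" and gh: "g * h = cmod N lam" and c: "degree c < N"
    and orth: "\<And>d. degree d < N \<Longrightarrow> g dvd d \<Longrightarrow> (\<Sum>i<N. coeff c i * coeff d i) = 0"
  shows "reflect_poly h dvd c"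
proof -
  (* The coefficients r, ..., N - 1 of c g* vanish, so the part A of c g* below degree r
     satisfies c = A h* modulo X^N, and both sides have degree < N. *)
  note facts = factors_of_cmod[OF N lam gh]
  define r where "r = degree g"
  define hs where "hs = reflect_poly h"
  define Q where "Q = c * reflect_poly g"
  define A where "A = poly_cutoff r Q"
  have QA_low: "coeff ((Q - A) * hs) i = 0" if "i < N" for i
    unfolding coeff_mult using coeff_mult_reflect_poly_eq_0_if_orthogonal[OF c facts(1) _ _ orth] that
    by (intro sum.neutral) (auto simp: A_def Q_def r_def coeff_poly_cutoff)
  have deg_A: "degree (A * hs) < N"
  proof (cases "A = 0")
    case False
    have "degree A < r"
      by (intro degree_lessI) (use False in \<open>auto simp: A_def coeff_poly_cutoff\<close>)
    moreover have "degree hs = N - r" "hs \<noteq> 0"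
      using facts(2,3) by (auto simp: hs_def r_def)
    ultimately show ?thesis using False facts(3) by (simp add: degree_mult_eq r_def)
  qed (use N in simp)
  have expand: "c - smult lam (monom 1 N * c) = A * hs + (Q - A) * hs"
  proof -
    have "c - smult lam (monom 1 N * c) = c * (reflect_poly g * hs)"
      unfolding hs_def facts(4) by (simp add: right_diff_distrib mult.commute)
    also have "\<dots> = A * hs + (Q - A) * hs"
      by (simp add: Q_def mult.assoc ring_distribs)
    finally show ?thesis .
  qed
  have "c = A * hs"
  proof (rule poly_eqI)
    fix i
    show "coeff c i = coeff (A * hs) i"
    proof (cases "i < N")
      case True
      then show ?thesis
        using arg_cong[OF expand, of "\<lambda>p. coeff p i"] QA_low[OF True] by (simp add: coeff_monom_mult)
    qed (use c deg_A in \<open>simp add: coeff_eq_0\<close>)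
  qed
  then show ?thesis by (simp add: hs_def)
qed

theorem dual_code_gen_ideal:
  fixes g h :: "'a::field poly"
  assumes N: "N > 0" and lam: "lam \<noteq> 0" and gh: "g * h = cmod N lam"
  shows "dual_code N (gen_ideal N lam g) = gen_ideal N (inverse lam) (reflect_poly h)"
proof -
  have "cmod N (inverse lam) = smult (- inverse lam) (1 - smult lam (monom 1 N))"
    using lam N by (intro poly_eqI) (auto simp: cmod_def coeff_pCons' coeff_1)
  then have "reflect_poly h dvd cmod N (inverse lam)"
    unfolding factors_of_cmod(4)[OF N lam gh, symmetric] by (simp add: dvd_smult)
  then have "gen_ideal N (inverse lam) (reflect_poly h) = {c. degree c < N \<and> reflect_poly h dvd c}"
    by (rule gen_ideal_eq_multiples[OF N])
  moreover have "gen_ideal N lam g = {d. degree d < N \<and> g dvd d}"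
    using gh by (intro gen_ideal_eq_multiples[OF N]) (metis dvd_triv_left)
  ultimately show ?thesis
    unfolding dual_code_def words_def
    using orthogonal_if_dvd[OF N lam gh] dvd_if_orthogonal[OF N lam gh] by auto
qed

lemma gen_ideal_smult:
  assumes "(s::'a::field) \<noteq> 0"
  shows "gen_ideal N mu (smult s g) = gen_ideal N mu g"
proof -
  have "(\<exists>f. c = (f * smult s g) mod cmod N mu) \<longleftrightarrow> (\<exists>f. c = (f * g) mod cmod N mu)" for c
  proof
    assume "\<exists>f. c = (f * smult s g) mod cmod N mu"
    then obtain f where "c = (smult s f * g) mod cmod N mu" by auto
    then show "\<exists>f. c = (f * g) mod cmod N mu" by blast
  next
    assume "\<exists>f. c = (f * g) mod cmod N mu"
    then obtain f where "c = (smult (inverse s) f * smult s g) mod cmod N mu"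
      using assms by auto
    then show "\<exists>f. c = (f * smult s g) mod cmod N mu" by blast
  qed
  then show ?thesis by (simp add: gen_ideal_def)
qed

lemma constacyclic_gen_ideal:
  assumes N: "N > 0"
  shows "constacyclic N mu (gen_ideal N (mu::'a::field) g)"
proof -
  have deg: "degree (cmod N mu) = N" and nz: "cmod N mu \<noteq> 0"
    using degree_cmod[OF N, of mu] N by auto
  have "(f * g) mod cmod N mu \<in> words N" for f
    using degree_mod_less[OF nz, of "f * g"] deg N by (auto simp: words_def)
  moreover have "(f1 * g) mod cmod N mu + (f2 * g) mod cmod N mu = ((f1 + f2) * g) mod cmod N mu"
    for f1 f2 by (simp add: poly_mod_add_left distrib_right)
  moreover have "smult r ((f * g) mod cmod N mu) = (smult r f * g) mod cmod N mu" for r f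
    by (simp add: mod_smult_left)
  moreover have "(monom 1 1 * ((f * g) mod cmod N mu)) mod cmod N mu
      = ((monom 1 1 * f) * g) mod cmod N mu" for f
    by (simp add: mod_mult_right_eq mult.assoc)
  moreover have "0 = (0 * g) mod cmod N mu" by simp
  ultimately show ?thesis
    unfolding constacyclic_def gen_ideal_def by blast
qed

definition reciprocal_assoc :: "'a::field poly \<Rightarrow> 'a poly \<Rightarrow> bool" where
  "reciprocal_assoc h T \<longleftrightarrow> (\<exists>s. s \<noteq> 0 \<and> reflect_poly h = smult s T)"

lemma reciprocal_assoc_mult:
  assumes "reciprocal_assoc h1 T1" "reciprocal_assoc h2 T2"
  shows "reciprocal_assoc (h1 * h2) (T1 * T2)"
proof -
  obtain s1 s2 where "s1 \<noteq> 0" "reflect_poly h1 = smult s1 T1" "s2 \<noteq> 0" "reflect_poly h2 = smult s2 T2"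
    using assms by (auto simp: reciprocal_assoc_def)
  then show ?thesis unfolding reciprocal_assoc_def
    by (intro exI[of _ "s1 * s2"]) (simp add: reflect_poly_mult mult.commute)
qed

lemma reciprocal_assoc_one: "reciprocal_assoc 1 1"
  unfolding reciprocal_assoc_def by (auto intro!: exI[of _ 1])

lemma reciprocal_assoc_power: "reciprocal_assoc h T \<Longrightarrow> reciprocal_assoc (h ^ n) (T ^ n)"
  by (induction n) (simp_all add: reciprocal_assoc_one reciprocal_assoc_mult)

lemma reciprocal_assoc_binomial:
  assumes "a * b = 1" and "L > 0"
  shows "reciprocal_assoc (monom 1 L - [:a:]) (monom 1 L - [:b:])"
proof -
  have "reflect_poly (monom 1 L - [:a:]) = smult (- a) (monom 1 L - [:b:])"
    using reflect_poly_cmod[OF assms(2), of a] assms(1)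
    by (simp add: cmod_def smult_diff_right smult_monom one_pCons flip: minus_monom)
  moreover have "a \<noteq> 0" using assms(1) by auto
  ultimately show ?thesis unfolding reciprocal_assoc_def by (intro exI[of _ "- a"]) simp
qed

lemma reciprocal_assoc_binomial_plus:
  assumes "a * b = 1" and "L > 0"
  shows "reciprocal_assoc (monom 1 L + [:a:]) (monom 1 L + [:b:])"
proof -
  have plus: "monom 1 L + [:c:] = monom 1 L - [:- c:]" for c :: 'a
    by (simp add: diff_conv_add_uminus)
  have "reciprocal_assoc (monom 1 L - [:- a:]) (monom 1 L - [:- b:])"
    by (rule reciprocal_assoc_binomial) (use assms in auto)
  then show ?thesis by (simp only: plus)
qed

theorem dual_code_gen_ideal_reciprocal:
  assumes "N > 0" "lam \<noteq> 0" "g * h = cmod N lam" "reciprocal_assoc h T"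
  shows "dual_code N (gen_ideal N lam g) = gen_ideal N (inverse lam) T"
proof -
  obtain s where "s \<noteq> 0" "reflect_poly h = smult s T"
    using assms(4) by (auto simp: reciprocal_assoc_def)
  then show ?thesis using dual_code_gen_ideal[OF assms(1-3)] gen_ideal_smult by simp
qed

section \<open>Roots of unity\<close>

definition primitive_root_unity :: "'a::monoid_mult \<Rightarrow> nat \<Rightarrow> bool" where
  "primitive_root_unity w M \<longleftrightarrow> (\<forall>k. w ^ k = 1 \<longleftrightarrow> M dvd k)"

lemma power_mod_period:
  fixes w :: "'a::monoid_mult"
  assumes "w ^ r = 1"
  shows "w ^ (k mod r) = w ^ k"
proof -
  have "w ^ k = (w ^ r) ^ (k div r) * w ^ (k mod r)"
    by (metis div_mult_mod_eq mult.commute power_add power_mult)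
  then show ?thesis using assms by simp
qed

lemma nonzero_power_card_minus_one:
  fixes x :: "'a::{finite,field}"
  assumes "x \<noteq> 0"
  shows "x ^ (CARD('a) - 1) = 1"
proof -
  have "(\<Prod>y\<in>UNIV-{0}. x * y) = x ^ card (UNIV - {0::'a}) * \<Prod>(UNIV-{0::'a})"
    by (simp add: prod.distrib)
  also have "card (UNIV - {0::'a}) = CARD('a) - 1" by (simp add: card_Diff_singleton)
  also have "(\<Prod>y\<in>UNIV-{0}. x * y) = (\<Prod>y\<in>UNIV-{0}. y)"
    by (rule prod.reindex_bij_witness[of _ "\<lambda>y. y / x" "\<lambda>y. x * y"]) (use assms in auto)
  finally show ?thesis by simp
qed

lemma card_field_minus_one_pos: "CARD('a::{finite,field}) - 1 > 0"
proof -
  have "card {0::'a, 1} \<le> CARD('a)" by (rule card_mono) auto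
  then show ?thesis by simp
qed

lemma card_minus_one_le_generator_period:
  fixes xi :: "'a::{finite,field}"
  assumes xi: "is_generator xi" and r: "xi ^ r = 1" "r > 0"
  shows "CARD('a) - 1 \<le> r"
proof -
  have "UNIV - {0} \<subseteq> (\<lambda>k. xi ^ k) ` {..<r}"
  proof
    fix x :: 'a assume "x \<in> UNIV - {0}"
    then obtain k where "x = xi ^ k" using xi by (auto simp: is_generator_def)
    then have "x = xi ^ (k mod r)" using power_mod_period[OF r(1)] by simp
    then show "x \<in> (\<lambda>k. xi ^ k) ` {..<r}" using r(2) by auto
  qed
  then have "card (UNIV - {0::'a}) \<le> card ((\<lambda>k. xi ^ k) ` {..<r})"
    by (intro card_mono) simp_all
  also have "\<dots> \<le> r"
    using card_image_le[of "{..<r}" "\<lambda>k. xi ^ k"] by simp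
  finally show ?thesis by (simp add: card_Diff_singleton)
qed

lemma primitive_root_unity_generator:
  fixes xi :: "'a::{finite,field}"
  assumes xi: "is_generator xi"
  shows "primitive_root_unity xi (CARD('a) - 1)"
  unfolding primitive_root_unity_def
proof (intro allI iffI)
  define Q where "Q = CARD('a) - 1"
  have Q: "Q > 0" unfolding Q_def by (rule card_field_minus_one_pos)
  have xQ: "xi ^ Q = 1"
    using xi nonzero_power_card_minus_one by (auto simp: is_generator_def Q_def)
  fix k
  show "xi ^ k = 1" if "(CARD('a) - 1) dvd k"
    using that xQ by (auto simp: Q_def power_mult elim!: dvdE)
  show "(CARD('a) - 1) dvd k" if "xi ^ k = 1"
  proof (rule ccontr)
    assume "\<not> (CARD('a) - 1) dvd k"
    then have "k mod Q > 0" by (simp add: Q_def mod_greater_zero_iff_not_dvd)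
    moreover have "xi ^ (k mod Q) = 1" using power_mod_period[OF xQ] that by simp
    ultimately have "Q \<le> k mod Q" using card_minus_one_le_generator_period[OF xi] by (simp add: Q_def)
    then show False using mod_less_divisor[OF Q, of k] by simp
  qed
qed

lemma primitive_root_unity_power:
  assumes "primitive_root_unity w (k * M)" and "k > 0"
  shows "primitive_root_unity (w ^ k) M"
  using assms by (simp add: primitive_root_unity_def flip: power_mult)

lemma primitive_root_unity_power_div:
  assumes "primitive_root_unity w Q" and "M dvd Q" and "Q > 0"
  shows "primitive_root_unity (w ^ (Q div M)) M"
  using assms by (intro primitive_root_unity_power) (auto elim!: dvdE)

lemma primitive_root_unity_generator_power_div:
  fixes xi :: "'a::{finite,field}"
  assumes "is_generator xi" and "M dvd CARD('a) - 1"
  shows "primitive_root_unity (xi ^ ((CARD('a) - 1) div M)) M"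
  using primitive_root_unity_power_div[OF primitive_root_unity_generator[OF assms(1)] assms(2)]
    card_field_minus_one_pos by blast

lemma primitive_root_unity_power_coprime:
  assumes "primitive_root_unity w M" and "coprime k M"
  shows "primitive_root_unity (w ^ k) M"
  using assms
  by (simp add: primitive_root_unity_def coprime_dvd_mult_right_iff coprime_commute flip: power_mult)

lemma primitive_root_unity_nonzero:
  fixes w :: "'a::semiring_1"
  assumes "primitive_root_unity w M" and "M > 0"
  shows "w \<noteq> 0"
proof
  assume "w = 0"
  then have "w ^ M = 0" using assms(2) by (simp add: power_0_left)
  moreover have "w ^ M = 1" using assms(1) by (simp add: primitive_root_unity_def)
  ultimately show False by simp
qed

lemma inj_on_primitive_root_unity_power:
  fixes w :: "'a::field"
  assumes w: "primitive_root_unity w M"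
  shows "inj_on (\<lambda>i. w ^ i) {..<M}"
proof (rule linorder_inj_onI)
  fix i j assume ij: "i < j" "j \<in> {..<M}"
  have "w \<noteq> 0" using primitive_root_unity_nonzero[OF w] ij by simp
  moreover have "\<not> M dvd (j - i)" using ij by (intro nat_dvd_not_less) auto
  then have "w ^ (j - i) \<noteq> 1" using w by (simp add: primitive_root_unity_def)
  ultimately have "w ^ i \<noteq> w ^ i * w ^ (j - i)" by simp
  then show "w ^ i \<noteq> w ^ j" using ij by (simp flip: power_add)
qed auto

section \<open>Factoring binomials\<close>

lemma prod_linear_primitive_root_unity:
  fixes b w :: "'a::field"
  assumes w: "primitive_root_unity w M" and M: "M > 0"
  shows "(\<Prod>i<M. [:- (b * w ^ i), 1:]) = monom 1 M - [:b ^ M:]"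
proof (cases "b = 0")
  case True
  then show ?thesis using M by (simp add: monom_altdef)
next
  case False
  define A where "A = (\<lambda>i. b * w ^ i) ` {..<M}"
  have "card A = M"
    unfolding A_def using False inj_on_primitive_root_unity_power[OF w]
    by (subst card_image) (auto simp: inj_on_def)
  have wM: "w ^ M = 1" using w by (simp add: primitive_root_unity_def)
  have root: "(b * w ^ i) ^ M = b ^ M" for i
    by (simp add: power_mult_distrib wM flip: power_mult) (simp add: mult.commute power_mult wM)
  have deg: "degree (monom 1 M - [:c:]) = M" for c :: 'a
    using degree_cmod[OF M, of c] by (simp add: cmod_def)
  have deg_prod: "degree (\<Prod>i<M. [:- (b * w ^ i), 1:]) = M"
    by (simp add: degree_prod_eq_sum_degree)
  show ?thesis
  proof (rule poly_eqI_degree_lead_coeff[where n = M and A = A])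
    show "coeff (\<Prod>i<M. [:- (b * w ^ i), 1:]) M = coeff (monom 1 M - [:b ^ M:]) M"
      using M deg_prod lead_coeff_prod[of "\<lambda>i. [:- (b * w ^ i), 1:]" "{..<M}"] by (simp add: coeff_pCons')
    show "poly (\<Prod>i<M. [:- (b * w ^ i), 1:]) z = poly (monom 1 M - [:b ^ M:]) z" if "z \<in> A" for z
      using that by (auto simp: A_def poly_prod poly_monom root)
  qed (use deg deg_prod \<open>card A = M\<close> in simp_all)
qed

lemma pcompose_monom_1: "pcompose (monom 1 M) p = p ^ M"
  by (induction M) (simp_all add: monom_Suc pcompose_pCons monom_0 one_pCons)

lemma prod_binomial_primitive_root_unity:
  fixes b w :: "'a::field"
  assumes w: "primitive_root_unity w M" and M: "M > 0"
  shows "(\<Prod>i<M. monom 1 L - [:b * w ^ i:]) = monom 1 (L * M) - [:b ^ M:]"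
proof -
  have "pcompose [:- a, 1:] (monom 1 L) = monom 1 L - [:a:]" for a :: 'a
    by (simp add: pcompose_pCons one_pCons)
  then show ?thesis
    using arg_cong[OF prod_linear_primitive_root_unity[OF w M, of b], of "\<lambda>p. pcompose p (monom 1 L)"]
    by (simp add: pcompose_prod pcompose_diff pcompose_monom_1 monom_power)
qed

lemma prod_binomial_primitive_root_unity':
  fixes b w :: "'a::field"
  assumes w: "primitive_root_unity w M" and M: "M > 0"
  shows "(\<Prod>i\<in>{1..M}. monom 1 L - [:b * w ^ i:]) = monom 1 (L * M) - [:b ^ M:]"
proof -
  have "w ^ M = w ^ 0" using w by (simp add: primitive_root_unity_def)
  moreover have "{1..M} = insert M {1..<M}" "{..<M} = insert 0 {1..<M}" using M by auto
  ultimately have "(\<Prod>i\<in>{1..M}. monom 1 L - [:b * w ^ i:]) = (\<Prod>i<M. monom 1 L - [:b * w ^ i:])"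
    by simp
  then show ?thesis using prod_binomial_primitive_root_unity[OF w M] by simp
qed

(* The exponents k divisible by l run through the powers of w^l, a root of unity of order
   l^(s-1), and contribute the binomial of the next lower level. *)
lemma prod_binomial_coprime_exponents:
  fixes b w :: "'a::field"
  assumes w: "primitive_root_unity w (l ^ s)" and l: "prime l" and s: "s \<ge> 1"
  shows "(\<Prod>k\<in>{k. 1 \<le> k \<and> k \<le> l ^ s \<and> \<not> l dvd k}. monom 1 L - [:b * w ^ k:])
           * (monom 1 (L * l ^ (s - 1)) - [:b ^ l ^ (s - 1):])
         = monom 1 (L * l ^ s) - [:b ^ l ^ s:]"
proof -
  define K where "K = {k. 1 \<le> k \<and> k \<le> l ^ s \<and> \<not> l dvd k}"
  define J where "J = (\<lambda>k. l * k) ` {1..l ^ (s - 1)}"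
  have l0: "l > 0" using l prime_gt_0_nat by blast
  have ls: "l ^ s = l * l ^ (s - 1)" using s by (simp flip: power_Suc)
  have split: "{1..l ^ s} = K \<union> J" "K \<inter> J = {}"
    unfolding K_def J_def ls using l0 by (auto simp: Suc_le_eq)
  have "(\<Prod>k\<in>J. monom 1 L - [:b * w ^ k:]) = (\<Prod>k\<in>{1..l ^ (s - 1)}. monom 1 L - [:b * (w ^ l) ^ k:])"
    unfolding J_def by (subst prod.reindex) (use l0 in \<open>auto simp: inj_on_def power_mult\<close>)
  also have "\<dots> = monom 1 (L * l ^ (s - 1)) - [:b ^ l ^ (s - 1):]"
    using w l0 ls by (intro prod_binomial_primitive_root_unity' primitive_root_unity_power) auto
  finally have "(\<Prod>k\<in>{1..l ^ s}. monom 1 L - [:b * w ^ k:])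
      = (\<Prod>k\<in>K. monom 1 L - [:b * w ^ k:]) * (monom 1 (L * l ^ (s - 1)) - [:b ^ l ^ (s - 1):])"
    unfolding split(1) by (subst prod.union_disjoint) (auto simp: K_def J_def split(2))
  then show ?thesis
    using prod_binomial_primitive_root_unity'[OF w] l0 by (simp add: K_def)
qed

lemma prod_binomial_tower:
  fixes b w :: "'a::field"
  assumes w: "primitive_root_unity w (l ^ s)" and l: "prime l" and s: "s \<ge> 1"
  shows "(\<Prod>i<l ^ s. monom 1 L - [:b * w ^ i:]) *
         (\<Prod>j\<in>{1..d}. \<Prod>k\<in>{k. 1 \<le> k \<and> k \<le> l ^ s \<and> \<not> l dvd k}.
            monom 1 (L * l ^ j) - [:b ^ l ^ j * w ^ k:])
       = monom 1 (L * l ^ (s + d)) - [:b ^ l ^ (s + d):]"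
proof (induction d)
  case 0
  then show ?case using prod_binomial_primitive_root_unity[OF w] l by (simp add: prime_gt_0_nat)
next
  case (Suc d)
  define F where "F j = (\<Prod>k\<in>{k. 1 \<le> k \<and> k \<le> l ^ s \<and> \<not> l dvd k}.
      monom 1 (L * l ^ j) - [:b ^ l ^ j * w ^ k:])" for j
  have e1: "l ^ Suc d * l ^ (s - 1) = l ^ (s + d)" and e2: "l ^ Suc d * l ^ s = l ^ (s + Suc d)"
    using s by (simp_all only: add.commute[of s] flip: power_add) (simp_all add: Suc_le_eq)
  have "(\<Prod>i<l ^ s. monom 1 L - [:b * w ^ i:]) * (\<Prod>j\<in>{1..Suc d}. F j)
      = ((\<Prod>i<l ^ s. monom 1 L - [:b * w ^ i:]) * (\<Prod>j\<in>{1..d}. F j)) * F (Suc d)"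
    by (simp add: mult.assoc)
  also have "\<dots> = F (Suc d) * (monom 1 (L * l ^ (s + d)) - [:b ^ l ^ (s + d):])"
    using Suc.IH by (simp add: F_def mult.commute)
  also have "\<dots> = monom 1 (L * l ^ (s + Suc d)) - [:b ^ l ^ (s + Suc d):]"
    using prod_binomial_coprime_exponents[OF w l s, of "L * l ^ Suc d" "b ^ l ^ Suc d",
        unfolded mult.assoc e1 e2 power_mult[symmetric]]
    by (simp only: F_def)
  finally show ?case by (simp add: F_def)
qed

lemma binomial_difference_of_squares:
  "(monom 1 L - [:a:]) * (monom 1 L + [:a:]) = monom 1 (2 * L) - [:(a::'a::comm_ring_1) ^ 2:]"
  by (simp add: algebra_simps mult_monom power2_eq_square flip: mult_2)

lemma linear_poly_eq_binomial: "[:- (a::'a::comm_ring_1), 1:] = monom 1 1 - [:a:]" "[:a, 1:] = monom 1 1 + [:a:]"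
  by (simp_all add: monom_Suc monom_0 one_pCons)

section \<open>Prime characteristic\<close>

lemma CHAR_eq_of_card_prime_power:
  assumes p: "prime p" and card: "CARD('a::{finite,field}) = p ^ r"
  shows "CHAR('a) = p"
proof -
  have "CHAR('a) > 0" by (rule finite_imp_CHAR_pos) simp
  then have "prime CHAR('a)" by (rule prime_CHAR_semidom)
  moreover have "CHAR('a) dvd p ^ r" using CHAR_dvd_CARD[where 'a='a] card by simp
  ultimately show ?thesis using p by (metis prime_dvd_power primes_dvd_imp_eq)
qed

lemma diff_power_CHAR_power:
  fixes x y :: "'a::comm_ring_1"
  assumes "prime CHAR('a)"
  shows "(x - y) ^ (CHAR('a) ^ n) = x ^ (CHAR('a) ^ n) - y ^ (CHAR('a) ^ n)"
proof -
  have "(- y) ^ (CHAR('a) ^ n) = - (y ^ (CHAR('a) ^ n))" for y :: 'a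
    using assms by (induction n arbitrary: y) (simp_all add: power_mult minus_power_prime_CHAR)
  then show ?thesis using freshmans_dream'[OF assms refl, of x "- y"] by simp
qed

lemma binomial_power_CHAR:
  assumes "CHAR('a::field) = p" and "prime p"
  shows "(monom 1 M - [:c::'a:]) ^ (p ^ n) = monom 1 (M * p ^ n) - [:c ^ p ^ n:]"
  using diff_power_CHAR_power[of "monom 1 M" "[:c:]" n] assms
  by (simp add: monom_power poly_const_pow)

(* g generates a code and T its dual: the check polynomial h of g has reciprocal T up to a unit. *)
definition dual_generators :: "nat \<Rightarrow> 'a::field poly \<Rightarrow> 'a poly \<Rightarrow> 'a poly \<Rightarrow> bool" where
  "dual_generators P F g T \<longleftrightarrow> (\<exists>h. g * h = F ^ P \<and> reciprocal_assoc h T)"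

lemma dual_generators_power:
  assumes "e \<le> P" and "reciprocal_assoc f f'"
  shows "dual_generators P f (f ^ e) (f' ^ (P - e))"
  unfolding dual_generators_def using assms
  by (intro exI[of _ "f ^ (P - e)"]) (simp add: reciprocal_assoc_power flip: power_add)

lemma dual_generators_mult:
  assumes "dual_generators P F1 g1 T1" and "dual_generators P F2 g2 T2"
  shows "dual_generators P (F1 * F2) (g1 * g2) (T1 * T2)"
proof -
  obtain h1 h2 where "g1 * h1 = F1 ^ P" "reciprocal_assoc h1 T1" "g2 * h2 = F2 ^ P" "reciprocal_assoc h2 T2"
    using assms by (auto simp: dual_generators_def)
  then show ?thesis unfolding dual_generators_def
    by (intro exI[of _ "h1 * h2"]) (simp add: reciprocal_assoc_mult power_mult_distrib mult_ac)
qed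

lemma dual_generators_prod:
  "(\<And>i. i \<in> I \<Longrightarrow> dual_generators P (F i) (g i) (T i))
    \<Longrightarrow> dual_generators P (prod F I) (prod g I) (prod T I)"
proof (induction I rule: infinite_finite_induct)
  case (insert i I)
  then show ?case by (simp add: dual_generators_mult)
qed (auto simp: dual_generators_def reciprocal_assoc_one intro!: exI[of _ 1])

lemma dual_code_gen_ideal_dual_generators:
  fixes g T :: "'a::field poly"
  assumes char: "CHAR('a) = p" "prime p" and M: "M > 0" and a: "a \<noteq> 0"
    and gT: "dual_generators (p ^ n) (monom 1 M - [:a:]) g T"
  shows "dual_code (M * p ^ n) (gen_ideal (M * p ^ n) (a ^ p ^ n) g)
    = gen_ideal (M * p ^ n) (inverse (a ^ p ^ n)) T"
proof -
  obtain h where gh: "g * h = (monom 1 M - [:a:]) ^ p ^ n" and hT: "reciprocal_assoc h T"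
    using gT by (auto simp: dual_generators_def)
  show ?thesis
  proof (rule dual_code_gen_ideal_reciprocal[OF _ _ _ hT])
    show "M * p ^ n > 0" using M char prime_gt_0_nat by simp
    show "a ^ p ^ n \<noteq> 0" using a by simp
    show "g * h = cmod (M * p ^ n) (a ^ p ^ n)"
      using gh binomial_power_CHAR[OF char] by (simp add: cmod_def)
  qed
qed

section \<open>The five cases\<close>

lemma dual_code_case_I:
  fixes zeta c1 lam :: "'a::field"
  assumes char: "CHAR('a) = p" "prime p" and l: "prime l" "odd l"
    and zeta: "primitive_root_unity zeta (l ^ v)" "v \<ge> 1" and m: "m = v + d"
    and N: "N = 2 * l ^ m * p ^ n" and c1: "c1 \<noteq> 0" "c1 ^ N * lam = 1"
    and eps: "\<forall>i < l ^ v. eps i \<le> p ^ n \<and> ep i \<le> p ^ n"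
    and tau: "\<forall>j \<in> {1..d}. \<forall>k \<in> {k. 1 \<le> k \<and> k \<le> l ^ v \<and> \<not> l dvd k}.
      tau j k \<le> p ^ n \<and> sig j k \<le> p ^ n"
  shows "dual_code N (gen_ideal N lam
       ((\<Prod>i < l ^ v. [:- (inverse c1 * zeta ^ i), 1:] ^ eps i
                      * [:inverse c1 * zeta ^ i, 1:] ^ ep i) *
        (\<Prod>j \<in> {1..d}. \<Prod>k \<in> {k. 1 \<le> k \<and> k \<le> l ^ v \<and> \<not> l dvd k}.
           (monom 1 (l ^ j) - [:inverse c1 ^ (l ^ j) * zeta ^ k:]) ^ tau j k
         * (monom 1 (l ^ j) + [:inverse c1 ^ (l ^ j) * zeta ^ k:]) ^ sig j k)))
     = gen_ideal N (inverse lam)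
       ((\<Prod>i < l ^ v. [:- (c1 * inverse zeta ^ i), 1:] ^ (p ^ n - eps i)
                      * [:c1 * inverse zeta ^ i, 1:] ^ (p ^ n - ep i)) *
        (\<Prod>j \<in> {1..d}. \<Prod>k \<in> {k. 1 \<le> k \<and> k \<le> l ^ v \<and> \<not> l dvd k}.
           (monom 1 (l ^ j) - [:c1 ^ (l ^ j) * inverse zeta ^ k:]) ^ (p ^ n - tau j k)
         * (monom 1 (l ^ j) + [:c1 ^ (l ^ j) * inverse zeta ^ k:]) ^ (p ^ n - sig j k)))"
    (is "dual_code N (gen_ideal N lam ?g) = gen_ideal N (inverse lam) ?T")
proof -
  define K where "K = {k. 1 \<le> k \<and> k \<le> l ^ v \<and> \<not> l dvd k}"
  define b where "b = inverse c1"
  have l0: "l > 0" and zeta0: "zeta \<noteq> 0"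
    using primitive_root_unity_nonzero[OF zeta(1)] l by (simp_all add: prime_gt_0_nat)
  have "primitive_root_unity (zeta ^ 2) (l ^ v)"
    using l(2) by (intro primitive_root_unity_power_coprime[OF zeta(1)]) simp
  then have "(\<Prod>i < l ^ v. monom 1 2 - [:b ^ 2 * (zeta ^ 2) ^ i:]) *
      (\<Prod>j \<in> {1..d}. \<Prod>k \<in> K. monom 1 (2 * l ^ j) - [:(b ^ 2) ^ l ^ j * (zeta ^ 2) ^ k:])
      = monom 1 (2 * l ^ m) - [:(b ^ 2) ^ l ^ m:]"
    using prod_binomial_tower[of "zeta ^ 2" l v 2 "b ^ 2" d] l zeta(2) by (simp add: K_def m)
  then have factor: "(\<Prod>i < l ^ v. (monom 1 1 - [:b * zeta ^ i:]) * (monom 1 1 + [:b * zeta ^ i:])) *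
      (\<Prod>j \<in> {1..d}. \<Prod>k \<in> K.
         (monom 1 (l ^ j) - [:b ^ l ^ j * zeta ^ k:]) * (monom 1 (l ^ j) + [:b ^ l ^ j * zeta ^ k:]))
      = monom 1 (2 * l ^ m) - [:(b ^ 2) ^ l ^ m:]"
    by (simp add: binomial_difference_of_squares power_mult_distrib mult_ac flip: power_mult)
  have "dual_generators (p ^ n) (monom 1 (2 * l ^ m) - [:(b ^ 2) ^ l ^ m:]) ?g ?T"
    unfolding factor[symmetric] linear_poly_eq_binomial(1)
    unfolding linear_poly_eq_binomial(2) K_def b_def
    by (intro dual_generators_mult dual_generators_prod dual_generators_power
        reciprocal_assoc_binomial reciprocal_assoc_binomial_plus)
      (use eps tau c1 zeta0 l0 in \<open>auto simp: field_simps\<close>)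
  moreover have "lam = ((b ^ 2) ^ l ^ m) ^ p ^ n"
    using c1 by (simp add: N b_def field_simps flip: power_mult)
  ultimately show ?thesis
    using dual_code_gen_ideal_dual_generators[OF char, of "2 * l ^ m"] l0 c1
    by (simp add: N b_def mult.assoc)
qed

lemma dual_code_case_IIA:
  fixes alpha xi c2 lam :: "'a::field"
  assumes char: "CHAR('a) = p" "prime p"
    and alpha: "primitive_root_unity alpha M" "M > 0" and xi: "xi \<noteq> 0"
    and N: "N = 2 * M * p ^ n" and c2: "c2 \<noteq> 0" "c2 ^ N * lam = xi ^ (M * p ^ n)"
    and eps: "\<forall>i < M. eps i \<le> p ^ n"
  shows "dual_code N (gen_ideal N lam
       (\<Prod>i < M. (monom 1 2 - [:inverse c2 ^ 2 * xi * alpha ^ i:]) ^ eps i))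
     = gen_ideal N (inverse lam)
       (\<Prod>i < M. (monom 1 2 - [:c2 ^ 2 * inverse xi * inverse alpha ^ i:]) ^ (p ^ n - eps i))"
    (is "dual_code N (gen_ideal N lam ?g) = gen_ideal N (inverse lam) ?T")
proof -
  define b where "b = inverse c2 ^ 2 * xi"
  have alpha0: "alpha \<noteq> 0" using primitive_root_unity_nonzero[OF alpha] .
  have "dual_generators (p ^ n) (monom 1 (2 * M) - [:b ^ M:]) ?g ?T"
    unfolding prod_binomial_primitive_root_unity[OF alpha, symmetric] b_def
    by (intro dual_generators_prod dual_generators_power reciprocal_assoc_binomial)
      (use eps c2 xi alpha0 in \<open>auto simp: field_simps\<close>)
  moreover have "lam = (b ^ M) ^ p ^ n"
    using c2 by (simp add: N b_def field_simps flip: power_mult)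
  ultimately show ?thesis
    using dual_code_gen_ideal_dual_generators[OF char, of "2 * M"] alpha c2 xi
    by (simp add: N b_def mult.assoc)
qed

lemma dual_code_case_IIB:
  fixes zeta xi beta c2 lam :: "'a::field"
  assumes char: "CHAR('a) = p" "prime p" and l: "prime l"
    and zeta: "primitive_root_unity zeta (l ^ u)" "u \<ge> 1" and m: "m = u + d"
    and N: "N = 2 * l ^ m * p ^ n" and c2: "c2 \<noteq> 0" "c2 ^ N * lam = xi ^ (l ^ u * p ^ n)"
    and beta: "beta ^ (l ^ m) * xi ^ (l ^ u) = 1"
    and eps: "\<forall>i < l ^ u. eps i \<le> p ^ n"
    and sig: "\<forall>j \<in> {1..d}. \<forall>k \<in> {k. 1 \<le> k \<and> k \<le> l ^ u \<and> \<not> l dvd k}. sig j k \<le> p ^ n"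
  shows "dual_code N (gen_ideal N lam
       ((\<Prod>i < l ^ u. (monom 1 2 - [:inverse c2 ^ 2 * inverse beta * zeta ^ i:]) ^ eps i) *
        (\<Prod>j \<in> {1..d}. \<Prod>k \<in> {k. 1 \<le> k \<and> k \<le> l ^ u \<and> \<not> l dvd k}.
           (monom 1 (2 * l ^ j) - [:inverse c2 ^ (2 * l ^ j) * inverse beta ^ (l ^ j) * zeta ^ k:])
             ^ sig j k)))
     = gen_ideal N (inverse lam)
       ((\<Prod>i < l ^ u. (monom 1 2 - [:c2 ^ 2 * beta * inverse zeta ^ i:]) ^ (p ^ n - eps i)) *
        (\<Prod>j \<in> {1..d}. \<Prod>k \<in> {k. 1 \<le> k \<and> k \<le> l ^ u \<and> \<not> l dvd k}.
           (monom 1 (2 * l ^ j) - [:c2 ^ (2 * l ^ j) * beta ^ (l ^ j) * inverse zeta ^ k:])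
             ^ (p ^ n - sig j k)))"
    (is "dual_code N (gen_ideal N lam ?g) = gen_ideal N (inverse lam) ?T")
proof -
  define b where "b = inverse c2 ^ 2 * inverse beta"
  have l0: "l > 0" and zeta0: "zeta \<noteq> 0"
    using primitive_root_unity_nonzero[OF zeta(1)] l by (simp_all add: prime_gt_0_nat)
  have beta0: "beta \<noteq> 0" using beta l0 by (auto simp: power_0_left)
  have "(\<Prod>i < l ^ u. monom 1 2 - [:b * zeta ^ i:]) *
      (\<Prod>j \<in> {1..d}. \<Prod>k \<in> {k. 1 \<le> k \<and> k \<le> l ^ u \<and> \<not> l dvd k}.
         monom 1 (2 * l ^ j) - [:b ^ l ^ j * zeta ^ k:])
      = monom 1 (2 * l ^ m) - [:b ^ l ^ m:]"
    using prod_binomial_tower[OF zeta(1) l zeta(2), of 2 b d] by (simp add: m)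
  then have factor: "(\<Prod>i < l ^ u. monom 1 2 - [:inverse c2 ^ 2 * inverse beta * zeta ^ i:]) *
      (\<Prod>j \<in> {1..d}. \<Prod>k \<in> {k. 1 \<le> k \<and> k \<le> l ^ u \<and> \<not> l dvd k}.
         monom 1 (2 * l ^ j) - [:inverse c2 ^ (2 * l ^ j) * inverse beta ^ (l ^ j) * zeta ^ k:])
      = monom 1 (2 * l ^ m) - [:b ^ l ^ m:]"
    by (simp add: b_def power_mult_distrib power_mult)
  have "dual_generators (p ^ n) (monom 1 (2 * l ^ m) - [:b ^ l ^ m:]) ?g ?T"
    unfolding factor[symmetric]
    by (intro dual_generators_mult dual_generators_prod dual_generators_power reciprocal_assoc_binomial)
      (use eps sig c2 beta0 zeta0 l0 in \<open>auto simp: field_simps\<close>)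
  moreover have "lam = (b ^ l ^ m) ^ p ^ n"
  proof -
    have "inverse beta ^ l ^ m = xi ^ l ^ u" using beta beta0 by (simp add: field_simps)
    then have "b ^ l ^ m = inverse c2 ^ (2 * l ^ m) * xi ^ l ^ u"
      by (simp add: b_def power_mult_distrib power_mult)
    moreover have "lam = inverse c2 ^ N * xi ^ (l ^ u * p ^ n)"
      using c2 by (simp add: field_simps)
    ultimately show ?thesis by (simp add: N power_mult_distrib flip: power_mult)
  qed
  ultimately show ?thesis
    using dual_code_gen_ideal_dual_generators[OF char, of "2 * l ^ m"] l0 c2 beta0
    by (simp add: N b_def mult.assoc)
qed

lemma dual_code_case_IIIA:
  fixes delta xi d1 lam :: "'a::field"
  assumes char: "CHAR('a) = p" "prime p" and l: "l > 0"
    and delta: "primitive_root_unity delta (l ^ z)" and z: "z \<le> m" and xi: "xi \<noteq> 0"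
    and N: "N = 2 * l ^ m * p ^ n" and d1: "d1 \<noteq> 0" "d1 ^ N * lam = xi ^ (y * l ^ z * p ^ n)"
    and eps: "\<forall>i < l ^ z. eps i \<le> p ^ n"
  shows "dual_code N (gen_ideal N lam
       (\<Prod>i < l ^ z. (monom 1 (2 * l ^ (m - z))
                        - [:inverse d1 ^ (2 * l ^ (m - z)) * delta ^ i * xi ^ y:]) ^ eps i))
     = gen_ideal N (inverse lam)
       (\<Prod>i < l ^ z. (monom 1 (2 * l ^ (m - z))
                        - [:d1 ^ (2 * l ^ (m - z)) * inverse delta ^ i * inverse xi ^ y:])
                      ^ (p ^ n - eps i))"
    (is "dual_code N (gen_ideal N lam ?g) = gen_ideal N (inverse lam) ?T")
proof -
  define L where "L = 2 * l ^ (m - z)"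
  define b where "b = inverse d1 ^ L * xi ^ y"
  have delta0: "delta \<noteq> 0" using primitive_root_unity_nonzero[OF delta] l by simp
  have Lz: "L * l ^ z = 2 * l ^ m" using z by (simp add: L_def mult.assoc flip: power_add)
  have factor: "(\<Prod>i < l ^ z. monom 1 L - [:inverse d1 ^ L * delta ^ i * xi ^ y:])
      = monom 1 (2 * l ^ m) - [:b ^ l ^ z:]"
    using prod_binomial_primitive_root_unity[OF delta, of L b] l by (simp add: b_def Lz mult_ac)
  have "dual_generators (p ^ n) (monom 1 (2 * l ^ m) - [:b ^ l ^ z:]) ?g ?T"
    unfolding factor[symmetric] L_def
    by (intro dual_generators_prod dual_generators_power reciprocal_assoc_binomial)
      (use eps d1 xi delta0 l in \<open>auto simp: field_simps\<close>)
  moreover have "lam = (b ^ l ^ z) ^ p ^ n"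
  proof -
    have "b ^ l ^ z = inverse d1 ^ (2 * l ^ m) * xi ^ (y * l ^ z)"
      by (simp add: b_def power_mult_distrib Lz flip: power_mult)
    moreover have "lam = inverse d1 ^ N * xi ^ (y * l ^ z * p ^ n)"
      using d1 by (simp add: field_simps)
    ultimately show ?thesis by (simp add: N power_mult_distrib flip: power_mult)
  qed
  ultimately show ?thesis
    using dual_code_gen_ideal_dual_generators[OF char, of "2 * l ^ m"] l d1 xi
    by (simp add: N b_def mult.assoc)
qed

lemma dual_code_case_IIIB:
  fixes delta xi d1 lam :: "'a::field"
  assumes char: "CHAR('a) = p" "prime p" and l: "prime l" "odd l"
    and delta: "primitive_root_unity delta (l ^ z)" and z: "z \<le> m" and xi: "xi \<noteq> 0"
    and N: "N = 2 * l ^ m * p ^ n" and d1: "d1 \<noteq> 0" "d1 ^ N * lam = xi ^ (2 * y0 * l ^ z * p ^ n)"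
    and eps: "\<forall>i < l ^ z. eps i \<le> p ^ n \<and> ep i \<le> p ^ n"
  shows "dual_code N (gen_ideal N lam
       (\<Prod>i < l ^ z. (monom 1 (l ^ (m - z))
                        - [:inverse d1 ^ (l ^ (m - z)) * delta ^ i * xi ^ y0:]) ^ eps i
                    * (monom 1 (l ^ (m - z))
                        + [:inverse d1 ^ (l ^ (m - z)) * delta ^ i * xi ^ y0:]) ^ ep i))
     = gen_ideal N (inverse lam)
       (\<Prod>i < l ^ z. (monom 1 (l ^ (m - z))
                        - [:d1 ^ (l ^ (m - z)) * inverse delta ^ i * inverse xi ^ y0:]) ^ (p ^ n - eps i)
                    * (monom 1 (l ^ (m - z))
                        + [:d1 ^ (l ^ (m - z)) * inverse delta ^ i * inverse xi ^ y0:]) ^ (p ^ n - ep i))"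
    (is "dual_code N (gen_ideal N lam ?g) = gen_ideal N (inverse lam) ?T")
proof -
  define L where "L = l ^ (m - z)"
  define b where "b = inverse d1 ^ L * xi ^ y0"
  have l0: "l > 0" using l by (simp add: prime_gt_0_nat)
  have delta0: "delta \<noteq> 0" using primitive_root_unity_nonzero[OF delta] l0 by simp
  have Lz: "2 * L * l ^ z = 2 * l ^ m" using z by (simp add: L_def flip: power_add)
  have "primitive_root_unity (delta ^ 2) (l ^ z)"
    using l(2) by (intro primitive_root_unity_power_coprime[OF delta]) simp
  from prod_binomial_primitive_root_unity[OF this, of "2 * L" "b ^ 2", unfolded Lz]
  have factor: "(\<Prod>i < l ^ z. (monom 1 L - [:inverse d1 ^ L * delta ^ i * xi ^ y0:])
        * (monom 1 L + [:inverse d1 ^ L * delta ^ i * xi ^ y0:]))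
      = monom 1 (2 * l ^ m) - [:(b ^ 2) ^ l ^ z:]"
    using l0 by (simp add: binomial_difference_of_squares b_def power_mult_distrib mult_ac flip: power_mult)
  have "dual_generators (p ^ n) (monom 1 (2 * l ^ m) - [:(b ^ 2) ^ l ^ z:]) ?g ?T"
    unfolding factor[symmetric] L_def
    by (intro dual_generators_prod dual_generators_mult dual_generators_power
        reciprocal_assoc_binomial reciprocal_assoc_binomial_plus)
      (use eps d1 xi delta0 l0 in \<open>auto simp: field_simps\<close>)
  moreover have "lam = ((b ^ 2) ^ l ^ z) ^ p ^ n"
  proof -
    have "(b ^ 2) ^ l ^ z = inverse d1 ^ (2 * l ^ m) * xi ^ (2 * y0 * l ^ z)"
      by (simp add: b_def power_mult_distrib flip: power_mult Lz) (simp add: mult_ac)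
    moreover have "lam = inverse d1 ^ N * xi ^ (2 * y0 * l ^ z * p ^ n)"
      using d1 by (simp add: field_simps)
    ultimately show ?thesis by (simp add: N power_mult_distrib flip: power_mult)
  qed
  ultimately show ?thesis
    using dual_code_gen_ideal_dual_generators[OF char, of "2 * l ^ m"] l0 d1 xi
    by (simp add: N b_def mult.assoc)
qed

theorem corollary4p2:
  fixes p q l m n u v N :: nat
    and xi zeta lam :: "'a::{finite,field}"
  assumes p_prime: "prime p" and p_odd: "odd p"
    and q_card: "q = CARD('a)" and q_pow: "\<exists>r. q = p ^ r"
    and xi_gen: "is_generator xi"
    and l_prime: "prime l" and l_odd: "odd l" and l_ne_p: "l \<noteq> p"
    and l_dvd: "l dvd (q - 1)"
    and m_pos: "m \<ge> 1" and n_pos: "n \<ge> 1"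
    and u_def: "u = multiplicity l (q - 1)"
    and v_def: "v = min m u"
    and zeta_def: "zeta = xi ^ ((q - 1) div l ^ v)"
    and N_def: "N = 2 * l ^ m * p ^ n"
    and lam_nz: "lam \<noteq> 0"
  shows
  \<comment> \<open>(I)\<close>
  "(\<forall>(C :: 'a poly set) (c1 :: 'a) (eps :: nat \<Rightarrow> nat) (ep :: nat \<Rightarrow> nat)
       (tau :: nat \<Rightarrow> nat \<Rightarrow> nat) (sig :: nat \<Rightarrow> nat \<Rightarrow> nat).
     c1 \<noteq> 0 \<and> c1 ^ N * lam = 1 \<and>
     (\<forall>i < l ^ v. eps i \<le> p ^ n \<and> ep i \<le> p ^ n) \<and>
     (\<forall>j \<in> {1..m - u}. \<forall>k \<in> {k. 1 \<le> k \<and> k \<le> l ^ v \<and> \<not> l dvd k}.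
        tau j k \<le> p ^ n \<and> sig j k \<le> p ^ n) \<and>
     C = gen_ideal N lam
       ((\<Prod>i < l ^ v. [:- (inverse c1 * zeta ^ i), 1:] ^ eps i
                      * [:inverse c1 * zeta ^ i, 1:] ^ ep i) *
        (\<Prod>j \<in> {1..m - u}. \<Prod>k \<in> {k. 1 \<le> k \<and> k \<le> l ^ v \<and> \<not> l dvd k}.
           (monom 1 (l ^ j) - [:inverse c1 ^ (l ^ j) * zeta ^ k:]) ^ tau j k
         * (monom 1 (l ^ j) + [:inverse c1 ^ (l ^ j) * zeta ^ k:]) ^ sig j k))
     \<longrightarrow>
     dual_code N C = gen_ideal N (inverse lam)
       ((\<Prod>i < l ^ v. [:- (c1 * inverse zeta ^ i), 1:] ^ (p ^ n - eps i)
                      * [:c1 * inverse zeta ^ i, 1:] ^ (p ^ n - ep i)) *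
        (\<Prod>j \<in> {1..m - u}. \<Prod>k \<in> {k. 1 \<le> k \<and> k \<le> l ^ v \<and> \<not> l dvd k}.
           (monom 1 (l ^ j) - [:c1 ^ (l ^ j) * inverse zeta ^ k:]) ^ (p ^ n - tau j k)
         * (monom 1 (l ^ j) + [:c1 ^ (l ^ j) * inverse zeta ^ k:]) ^ (p ^ n - sig j k)))
     \<and> constacyclic N (inverse lam) (dual_code N C))
  \<and>
  \<comment> \<open>(II.A)\<close>
  (\<forall>(C :: 'a poly set) (c2 :: 'a) (alpha :: 'a) (eps :: nat \<Rightarrow> nat).
     m \<le> u \<and> c2 \<noteq> 0 \<and> c2 ^ N * lam = xi ^ (l ^ v * p ^ n) \<and>
     alpha = xi ^ ((q - 1) div l ^ m) \<and>
     (\<forall>i < l ^ m. eps i \<le> p ^ n) \<and>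
     C = gen_ideal N lam
       (\<Prod>i < l ^ m. (monom 1 2 - [:inverse c2 ^ 2 * xi * alpha ^ i:]) ^ eps i)
     \<longrightarrow>
     dual_code N C = gen_ideal N (inverse lam)
       (\<Prod>i < l ^ m. (monom 1 2 - [:c2 ^ 2 * inverse xi * inverse alpha ^ i:]) ^ (p ^ n - eps i))
     \<and> constacyclic N (inverse lam) (dual_code N C))
  \<and>
  \<comment> \<open>(II.B)\<close>
  (\<forall>(C :: 'a poly set) (c2 :: 'a) (beta :: 'a) (eps :: nat \<Rightarrow> nat)
       (sig :: nat \<Rightarrow> nat \<Rightarrow> nat).
     m > u \<and> c2 \<noteq> 0 \<and> c2 ^ N * lam = xi ^ (l ^ v * p ^ n) \<and>
     beta \<in> {(xi ^ (l ^ u)) ^ k | k :: nat. True} \<and> beta ^ (l ^ m) * xi ^ (l ^ u) = 1 \<and>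
     (\<forall>i < l ^ u. eps i \<le> p ^ n) \<and>
     (\<forall>j \<in> {1..m - u}. \<forall>k \<in> {k. 1 \<le> k \<and> k \<le> l ^ u \<and> \<not> l dvd k}. sig j k \<le> p ^ n) \<and>
     C = gen_ideal N lam
       ((\<Prod>i < l ^ u. (monom 1 2 - [:inverse c2 ^ 2 * inverse beta * zeta ^ i:]) ^ eps i) *
        (\<Prod>j \<in> {1..m - u}. \<Prod>k \<in> {k. 1 \<le> k \<and> k \<le> l ^ u \<and> \<not> l dvd k}.
           (monom 1 (2 * l ^ j) - [:inverse c2 ^ (2 * l ^ j) * inverse beta ^ (l ^ j) * zeta ^ k:])
             ^ sig j k))
     \<longrightarrow>
     dual_code N C = gen_ideal N (inverse lam)
       ((\<Prod>i < l ^ u. (monom 1 2 - [:c2 ^ 2 * beta * inverse zeta ^ i:]) ^ (p ^ n - eps i)) *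
        (\<Prod>j \<in> {1..m - u}. \<Prod>k \<in> {k. 1 \<le> k \<and> k \<le> l ^ u \<and> \<not> l dvd k}.
           (monom 1 (2 * l ^ j) - [:c2 ^ (2 * l ^ j) * beta ^ (l ^ j) * inverse zeta ^ k:])
             ^ (p ^ n - sig j k)))
     \<and> constacyclic N (inverse lam) (dual_code N C))
  \<and>
  \<comment> \<open>(III.A)\<close>
  (\<forall>(C :: 'a poly set) (jj :: nat) (d1 :: 'a) (y :: nat) (z :: nat) (delta :: 'a)
       (eps :: nat \<Rightarrow> nat).
     1 \<le> jj \<and> jj \<le> 2 * l ^ v - 1 \<and> jj \<noteq> l ^ v \<and>
     d1 \<noteq> 0 \<and> d1 ^ N * lam = xi ^ (jj * p ^ n) \<and>
     jj = y * l ^ z \<and> gcd y l = 1 \<and> z \<le> v - 1 \<and>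
     delta = xi ^ ((q - 1) div l ^ z) \<and> odd y \<and>
     (\<forall>i < l ^ z. eps i \<le> p ^ n) \<and>
     C = gen_ideal N lam
       (\<Prod>i < l ^ z. (monom 1 (2 * l ^ (m - z))
                        - [:inverse d1 ^ (2 * l ^ (m - z)) * delta ^ i * xi ^ y:]) ^ eps i)
     \<longrightarrow>
     dual_code N C = gen_ideal N (inverse lam)
       (\<Prod>i < l ^ z. (monom 1 (2 * l ^ (m - z))
                        - [:d1 ^ (2 * l ^ (m - z)) * inverse delta ^ i * inverse xi ^ y:])
                      ^ (p ^ n - eps i))
     \<and> constacyclic N (inverse lam) (dual_code N C))
  \<and>
  \<comment> \<open>(III.B)\<close>
  (\<forall>(C :: 'a poly set) (jj :: nat) (d1 :: 'a) (y :: nat) (y0 :: nat) (z :: nat) (delta :: 'a)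
       (eps :: nat \<Rightarrow> nat) (ep :: nat \<Rightarrow> nat).
     1 \<le> jj \<and> jj \<le> 2 * l ^ v - 1 \<and> jj \<noteq> l ^ v \<and>
     d1 \<noteq> 0 \<and> d1 ^ N * lam = xi ^ (jj * p ^ n) \<and>
     jj = y * l ^ z \<and> gcd y l = 1 \<and> z \<le> v - 1 \<and>
     delta = xi ^ ((q - 1) div l ^ z) \<and> y = 2 * y0 \<and>
     (\<forall>i < l ^ z. eps i \<le> p ^ n \<and> ep i \<le> p ^ n) \<and>
     C = gen_ideal N lam
       (\<Prod>i < l ^ z. (monom 1 (l ^ (m - z))
                        - [:inverse d1 ^ (l ^ (m - z)) * delta ^ i * xi ^ y0:]) ^ eps i
                    * (monom 1 (l ^ (m - z))
                        + [:inverse d1 ^ (l ^ (m - z)) * delta ^ i * xi ^ y0:]) ^ ep i)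
     \<longrightarrow>
     dual_code N C = gen_ideal N (inverse lam)
       (\<Prod>i < l ^ z. (monom 1 (l ^ (m - z))
                        - [:d1 ^ (l ^ (m - z)) * inverse delta ^ i * inverse xi ^ y0:]) ^ (p ^ n - eps i)
                    * (monom 1 (l ^ (m - z))
                        + [:d1 ^ (l ^ (m - z)) * inverse delta ^ i * inverse xi ^ y0:]) ^ (p ^ n - ep i))
     \<and> constacyclic N (inverse lam) (dual_code N C))"
proof -
  obtain r where "q = p ^ r" using q_pow by blast
  then have char: "CHAR('a) = p" using CHAR_eq_of_card_prime_power[OF p_prime] q_card by simp
  have xi0: "xi \<noteq> 0" using xi_gen by (simp add: is_generator_def)
  have l0: "l > 0" using l_prime by (simp add: prime_gt_0_nat)
  have u1: "u \<ge> 1"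
    using l_dvd l_prime card_field_minus_one_pos[where 'a='a] unfolding u_def q_card
    by (intro multiplicity_geI) (auto simp: prime_gt_1_nat)
  have root: "primitive_root_unity (xi ^ ((q - 1) div l ^ k)) (l ^ k)" if "k \<le> u" for k
    using that multiplicity_dvd[of l "q - 1"] primitive_root_unity_generator_power_div[OF xi_gen]
    unfolding u_def q_card by (meson dvd_trans le_imp_power_dvd)
  have v: "1 \<le> v" "v \<le> m" "v \<le> u" "m = v + (m - u)" using m_pos u1 v_def by auto
  have zeta: "primitive_root_unity zeta (l ^ v)" using root[OF v(3)] zeta_def by simp
  have N0: "N > 0" using N_def l0 p_prime by (simp add: prime_gt_0_nat)
  have dual_constacyclic: "(dual_code N C = gen_ideal N (inverse lam) T \<and> constacyclic N (inverse lam) (dual_code N C))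
      \<longleftrightarrow> dual_code N C = gen_ideal N (inverse lam) T" for C T
    using constacyclic_gen_ideal[OF N0] by auto
  show ?thesis
    unfolding dual_constacyclic
    apply (intro conjI allI impI; elim conjE; hypsubst)
    subgoal by (rule dual_code_case_I[OF char p_prime l_prime l_odd zeta v(1,4) N_def]) auto
    subgoal using v_def l0 xi0 by (intro dual_code_case_IIA[OF char p_prime root]) (auto simp: N_def)
    subgoal using v_def zeta by (intro dual_code_case_IIB[OF char p_prime l_prime _ u1 _ N_def]) auto
    subgoal using v xi0 N_def by (intro dual_code_case_IIIA[OF char p_prime l0 root]) auto
    subgoal using v xi0 N_def by (intro dual_code_case_IIIB[OF char p_prime l_prime l_odd root]) auto
    done
qed

end
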